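(* The $T$-coalgebra $(\mathcal{E}_0,\varepsilon)$ is locally finite: every $\phi\in\mathcal{E}_0$ is contained in a finite subcoalgebra of $(\mathcal{E}_0,\varepsilon)$.
   Context: Standing assumptions: $T:\mathbf{Set}\to\mathbf{Set}$ is a functor; $\mathcal{L}$ is a set of modalities with arities ($L/n$), each $L/n$ assigned an $n$-ary monotone singleton-preserving predicate lifting $[\![L]\!]$ for $T$ (a family $[\![L]\!]_X:(\mathcal{P}X)^n\to\mathcal{P}(TX)$, natural w.r.t. preimages under maps $f$ via $Tf$, monotone in each argument, with $|[\![L]\!]_X(\{x_1\},\dots,\{x_n\})|=1$ for all $x_i\in X$). Fix a set $V$ of variables. Expressions: $\phi::=z\mid\nu z.\,\phi\mid L(\phi_1,\dots,\phi_n)$. Closed: every variable occurrence bound by a $\nu$; guarded: every variable occurrence separated from its binding $\nu$ by at least one modality; $\mathcal{E}_0$ = closed guarded expressions. A $\nu$ occurrence is top-level if it is not in the scope of a modality. The coalgebra $\varepsilon:\mathcal{E}_0\to T\mathcal{E}_0$ is defined by $\varepsilon(L(\phi_1,\dots,\phi_n))=$ the unique element of $[\![L]\!]_{\mathcal{E}_0}(\{\phi_1\},\dots,\{\phi_n\})$, and $\varepsilon(\nu x.\phi)=\varepsilon(\phi[\nu x.\phi/x])$ (well-defined by induction on the number of top-level fixed point operators, which decreases by guardedness). A subcoalgebra of $(X,\xi)$ is a subset $Y\subseteq X$ with $\xi[Y]\subseteq T(\iota)[TY]$ for the inclusion $\iota:Y\to X$ (equivalently, a coalgebra structure on $Y$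 making $\iota$ a coalgebra morphism). *)

theory Defs
  imports Main
begin

text \<open>Expressions phi ::= z | nu z. phi | L(phi_1,...,phi_n) over variables of type 'v
  and modality names of type 'l; the arity of L is given separately by a function ar.\<close>

datatype ('l, 'v) expr = Var 'v | Nu 'v "('l, 'v) expr" | Mod 'l "('l, 'v) expr list"

fun wf_expr :: "('l \<Rightarrow> nat) \<Rightarrow> ('l, 'v) expr \<Rightarrow> bool" where
  "wf_expr ar (Var x) = True"
| "wf_expr ar (Nu x e) = wf_expr ar e"
| "wf_expr ar (Mod L es) = (length es = ar L \<and> (\<forall>e\<in>set es. wf_expr ar e))"

fun fvars :: "('l, 'v) expr \<Rightarrow> 'v set" where
  "fvars (Var x) = {x}"
| "fvars (Nu x e) = fvars e - {x}"
| "fvars (Mod L es) = (\<Union>e\<in>set es. fvars e)"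

definition closed_expr :: "('l, 'v) expr \<Rightarrow> bool" where
  "closed_expr e \<longleftrightarrow> fvars e = {}"

text \<open>guarded_aux U e: U is the set of variables whose binding nu is NOT separated
  from the current position by a modality.\<close>
fun guarded_aux :: "'v set \<Rightarrow> ('l, 'v) expr \<Rightarrow> bool" where
  "guarded_aux U (Var x) = (x \<notin> U)"
| "guarded_aux U (Nu x e) = guarded_aux (insert x U) e"
| "guarded_aux U (Mod L es) = (\<forall>e\<in>set es. guarded_aux {} e)"

definition guarded :: "('l, 'v) expr \<Rightarrow> bool" where
  "guarded e \<longleftrightarrow> guarded_aux {} e"

text \<open>Substitution of s for the free occurrences of x (only used with closed s,
  so no capture can occur).\<close>
fun subst :: "'v \<Rightarrow> ('l, 'v) expr \<Rightarrow> ('l, 'v) expr \<Rightarrow> ('l, 'v) expr" where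
  "subst x s (Var y) = (if x = y then s else Var y)"
| "subst x s (Nu y e) = (if x = y then Nu y e else Nu y (subst x s e))"
| "subst x s (Mod L es) = Mod L (map (subst x s) es)"

definition E0 :: "('l \<Rightarrow> nat) \<Rightarrow> ('l, 'v) expr set" where
  "E0 ar = {e. wf_expr ar e \<and> closed_expr e \<and> guarded e}"

text \<open>A functor T on the category whose objects are the subsets of the type 'x and whose
  morphisms X -> Y are (extensional) functions f with f ` X \<subseteq> Y.
  Tobj X is the set T X (inside an ambient type 't), Tmap X Y f is T f : T X -> T Y.\<close>
definition set_functor :: "('x set \<Rightarrow> 't set) \<Rightarrow> ('x set \<Rightarrow> 'x set \<Rightarrow> ('x \<Rightarrow> 'x) \<Rightarrow> 't \<Rightarrow> 't) \<Rightarrow> bool" where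
  "set_functor Tobj Tmap \<longleftrightarrow>
     (\<forall>X Y f. f ` X \<subseteq> Y \<longrightarrow> Tmap X Y f ` Tobj X \<subseteq> Tobj Y)
   \<and> (\<forall>X Y f g t. f ` X \<subseteq> Y \<longrightarrow> (\<forall>x\<in>X. f x = g x) \<longrightarrow> t \<in> Tobj X \<longrightarrow> Tmap X Y f t = Tmap X Y g t)
   \<and> (\<forall>X t. t \<in> Tobj X \<longrightarrow> Tmap X X id t = t)
   \<and> (\<forall>X Y Z f g t. f ` X \<subseteq> Y \<longrightarrow> g ` Y \<subseteq> Z \<longrightarrow> t \<in> Tobj X \<longrightarrow>
        Tmap X Z (g \<circ> f) t = Tmap Y Z g (Tmap X Y f t))"

text \<open>lift L X As is the predicate lifting [[L]]_X applied to the argument list As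
  (only meaningful when length As = ar L and every element of As is a subset of X).\<close>
definition monotone_sp_pred_lifting ::
  "('l \<Rightarrow> nat) \<Rightarrow> ('x set \<Rightarrow> 't set) \<Rightarrow> ('x set \<Rightarrow> 'x set \<Rightarrow> ('x \<Rightarrow> 'x) \<Rightarrow> 't \<Rightarrow> 't)
     \<Rightarrow> ('l \<Rightarrow> 'x set \<Rightarrow> 'x set list \<Rightarrow> 't set) \<Rightarrow> 'l \<Rightarrow> bool" where
  "monotone_sp_pred_lifting ar Tobj Tmap lift L \<longleftrightarrow>
     (\<forall>X As. length As = ar L \<longrightarrow> (\<forall>A\<in>set As. A \<subseteq> X) \<longrightarrow> lift L X As \<subseteq> Tobj X)
   \<and> (\<forall>X Y f Bs. f ` X \<subseteq> Y \<longrightarrow> length Bs = ar L \<longrightarrow> (\<forall>B\<in>set Bs. B \<subseteq> Y) \<longrightarrow>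
        lift L X (map (\<lambda>B. X \<inter> f -` B) Bs) = {t \<in> Tobj X. Tmap X Y f t \<in> lift L Y Bs})
   \<and> (\<forall>X As Bs. length As = ar L \<longrightarrow> length Bs = ar L \<longrightarrow> (\<forall>B\<in>set Bs. B \<subseteq> X) \<longrightarrow>
        (\<forall>i<ar L. As ! i \<subseteq> Bs ! i) \<longrightarrow> lift L X As \<subseteq> lift L X Bs)
   \<and> (\<forall>X xs. length xs = ar L \<longrightarrow> set xs \<subseteq> X \<longrightarrow>
        (\<exists>!t. t \<in> lift L X (map (\<lambda>x. {x}) xs)))"

text \<open>One unfolding step of a top-level fixed point, and the iterated unfolding until
  a modality is at the top (which happens for guarded closed expressions).\<close>
definition nu_unfold :: "('l, 'v) expr \<Rightarrow> ('l, 'v) expr" where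
  "nu_unfold e = (case e of Nu x b \<Rightarrow> subst x e b | _ \<Rightarrow> e)"

definition is_mod :: "('l, 'v) expr \<Rightarrow> bool" where
  "is_mod e \<longleftrightarrow> (\<exists>L es. e = Mod L es)"

definition head_nf :: "('l, 'v) expr \<Rightarrow> ('l, 'v) expr" where
  "head_nf e = (nu_unfold ^^ (LEAST n. is_mod ((nu_unfold ^^ n) e))) e"

text \<open>eps(L(phi_1..phi_n)) = unique element of [[L]]_E0({phi_1},..,{phi_n});
  eps(nu x. phi) = eps(phi[nu x. phi / x]).\<close>
definition eps :: "('l \<Rightarrow> nat) \<Rightarrow> ('l \<Rightarrow> ('l, 'v) expr set \<Rightarrow> ('l, 'v) expr set list \<Rightarrow> 't set)
     \<Rightarrow> ('l, 'v) expr \<Rightarrow> 't" where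
  "eps ar lift e = (case head_nf e of
      Mod L es \<Rightarrow> the_elem (lift L (E0 ar) (map (\<lambda>a. {a}) es))
    | _ \<Rightarrow> undefined)"

definition subcoalgebra :: "('x set \<Rightarrow> 't set) \<Rightarrow> ('x set \<Rightarrow> 'x set \<Rightarrow> ('x \<Rightarrow> 'x) \<Rightarrow> 't \<Rightarrow> 't)
     \<Rightarrow> 'x set \<Rightarrow> ('x \<Rightarrow> 't) \<Rightarrow> 'x set \<Rightarrow> bool" where
  "subcoalgebra Tobj Tmap X xi Y \<longleftrightarrow> Y \<subseteq> X \<and> xi ` Y \<subseteq> Tmap Y X id ` Tobj Y"

definition locally_finite :: "('x set \<Rightarrow> 't set) \<Rightarrow> ('x set \<Rightarrow> 'x set \<Rightarrow> ('x \<Rightarrow> 'x) \<Rightarrow> 't \<Rightarrow> 't)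
     \<Rightarrow> 'x set \<Rightarrow> ('x \<Rightarrow> 't) \<Rightarrow> bool" where
  "locally_finite Tobj Tmap X xi \<longleftrightarrow>
     (\<forall>x\<in>X. \<exists>Y. finite Y \<and> x \<in> Y \<and> subcoalgebra Tobj Tmap X xi Y)"

end

theory Submission
  imports Defs
begin

text \<open>Every closed guarded expression has only finitely many "derivatives": the expressions
  reachable from it by unfolding a top-level fixed point or by passing to an argument of a
  top-level modality are closed instances of its subterms, obtained by substituting for each
  bound variable the closed instance of its binder. So the reachable part of \<open>\<phi>\<close> inside
  \<open>E0\<close> is finite. Any subset \<open>Y\<close> of \<open>E0\<close> closed under these steps is a subcoalgebra: \<open>eps\<close>
  of \<open>y \<in> Y\<close> is the unique element of \<open>[[L]]({\<phi>\<^sub>1},\<dots>,{\<phi>\<^sub>n})\<close> for the head normal form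
  \<open>L(\<phi>\<^sub>1,\<dots>,\<phi>\<^sub>n)\<close> of \<open>y\<close>, whose arguments lie in \<open>Y\<close>, and by naturality of \<open>[[L]]\<close> along
  the inclusion \<open>Y \<subseteq> E0\<close> this element is the image of an element of \<open>T Y\<close>.\<close>

lemma sp_lifting_singletons_in_image:
  assumes lifting: "monotone_sp_pred_lifting ar Tobj Tmap lift L"
    and len: "length xs = ar L" and "set xs \<subseteq> Y" "Y \<subseteq> X"
  shows "the_elem (lift L X (map (\<lambda>x. {x}) xs)) \<in> Tmap Y X id ` Tobj Y"
proof -
  let ?S = "map (\<lambda>x. {x}) xs"
  note lifting = lifting[unfolded monotone_sp_pred_lifting_def]
  note natural = conjunct1[OF conjunct2[OF lifting], rule_format]
  note singletons = conjunct2[OF conjunct2[OF conjunct2[OF lifting]], rule_format]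
  have "lift L Y (map (\<lambda>B. Y \<inter> id -` B) ?S) = {t \<in> Tobj Y. Tmap Y X id t \<in> lift L X ?S}"
    using natural[of id Y X ?S] len assms(3,4) by auto
  moreover have "map (\<lambda>B. Y \<inter> id -` B) ?S = ?S"
    using assms(3) by auto
  ultimately have restrict: "lift L Y ?S = {t \<in> Tobj Y. Tmap Y X id t \<in> lift L X ?S}"
    by (simp only:)
  obtain t where t: "t \<in> lift L Y ?S"
    using singletons[OF len assms(3)] by blast
  have "set xs \<subseteq> X"
    using assms(3,4) by (rule order_trans)
  then have "\<exists>!u. u \<in> lift L X ?S"
    by (rule singletons[OF len])
  then obtain u where u: "lift L X ?S = {u}"
    by (auto elim!: ex1E)
  show ?thesis
    using t u unfolding restrict by auto
qed

fun msubst :: "('v \<rightharpoonup> ('l, 'v) expr) \<Rightarrow> ('l, 'v) expr \<Rightarrow> ('l, 'v) expr" where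
  "msubst \<rho> (Var x) = (case \<rho> x of Some t \<Rightarrow> t | None \<Rightarrow> Var x)"
| "msubst \<rho> (Nu x b) = Nu x (msubst (\<rho>(x := None)) b)"
| "msubst \<rho> (Mod L es) = Mod L (map (msubst \<rho>) es)"

definition closed_env :: "('v \<rightharpoonup> ('l, 'v) expr) \<Rightarrow> bool" where
  "closed_env \<rho> \<longleftrightarrow> (\<forall>t\<in>ran \<rho>. fvars t = {})"

lemma closed_env_upd [simp]:
  "closed_env (\<rho>(x := None))" "fvars t = {} \<Longrightarrow> closed_env (\<rho>(x \<mapsto> t))"
  if "closed_env \<rho>"
  using that by (auto simp: closed_env_def ran_def)

lemma msubst_empty [simp]: "msubst Map.empty e = e"
  by (induction e) (auto intro: map_idI)

lemma subst_no_fvar: "x \<notin> fvars t \<Longrightarrow> subst x s t = t"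
  by (induction t) (auto intro: map_idI)

lemma fvars_subst: "fvars (subst x s t) \<subseteq> (fvars t - {x}) \<union> fvars s"
  by (induction t) auto

lemma fvars_msubst: "closed_env \<rho> \<Longrightarrow> fvars (msubst \<rho> e) = fvars e - dom \<rho>"
proof (induction \<rho> e rule: msubst.induct)
  case (1 \<rho> x)
  then show ?case
    by (auto split: option.splits simp: closed_env_def ran_def)
next
  case (2 \<rho> x b)
  then have "fvars (msubst (\<rho>(x := None)) b) = fvars b - (dom \<rho> - {x})"
    by (simp del: fun_upd_apply)
  then show ?case
    by (simp del: fun_upd_apply) blast
qed auto

lemma subst_msubst:
  assumes "closed_env \<rho>" "fvars N = {}"
  shows "subst x N (msubst (\<rho>(x := None)) b) = msubst (\<rho>(x \<mapsto> N)) b"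
  using assms(1)
proof (induction b arbitrary: \<rho>)
  case (Var y)
  then show ?case
    using assms(2) by (auto split: option.splits simp: closed_env_def ran_def subst_no_fvar)
next
  case (Nu y c)
  show ?case
  proof (cases "y = x")
    case True
    have "(\<rho>(x := None))(x := None) = (\<rho>(x \<mapsto> N))(x := None)"
      by simp
    with True show ?thesis
      by (simp del: fun_upd_apply fun_upd_upd)
  next
    case False
    then have "(\<rho>(y := None))(x := None) = (\<rho>(x := None))(y := None)"
      and "(\<rho>(y := None))(x \<mapsto> N) = (\<rho>(x \<mapsto> N))(y := None)"
      by (auto simp: fun_eq_iff)
    with False Nu.IH[of "\<rho>(y := None)"] Nu.prems show ?thesis
      by (simp del: fun_upd_apply)
  qed
qed auto

section \<open>The Fischer--Ladner closure of an expression\<close>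

fun successors :: "('l, 'v) expr \<Rightarrow> ('l, 'v) expr set" where
  "successors (Var x) = {}"
| "successors (Nu x b) = {subst x (Nu x b) b}"
| "successors (Mod L es) = set es"

text \<open>\<open>fl_closure \<rho> e\<close> collects the instances of the non-variable subterms of \<open>e\<close>, where on the
  way down each bound variable is mapped by \<open>\<rho>\<close> to the instance of its binder.\<close>
fun fl_closure :: "('v \<rightharpoonup> ('l, 'v) expr) \<Rightarrow> ('l, 'v) expr \<Rightarrow> ('l, 'v) expr set" where
  "fl_closure \<rho> (Var x) = {}"
| "fl_closure \<rho> (Nu x b) =
     insert (msubst \<rho> (Nu x b)) (fl_closure (\<rho>(x \<mapsto> msubst \<rho> (Nu x b))) b)"
| "fl_closure \<rho> (Mod L es) = insert (msubst \<rho> (Mod L es)) (\<Union>e\<in>set es. fl_closure \<rho> e)"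

lemma finite_fl_closure: "finite (fl_closure \<rho> e)"
  by (induction \<rho> e rule: fl_closure.induct) (simp_all del: fun_upd_apply)

lemma msubst_in_fl_closure: "fvars e \<subseteq> dom \<rho> \<Longrightarrow> msubst \<rho> e \<in> fl_closure \<rho> e \<union> ran \<rho>"
  by (cases e) (auto simp: ran_def)

lemma self_in_fl_closure: "fvars e = {} \<Longrightarrow> e \<in> fl_closure Map.empty e"
  using msubst_in_fl_closure[of e Map.empty] by simp

lemma successors_fl_closure:
  "closed_env \<rho> \<Longrightarrow> fvars e \<subseteq> dom \<rho> \<Longrightarrow> w \<in> fl_closure \<rho> e \<Longrightarrow>
    successors w \<subseteq> fl_closure \<rho> e \<union> ran \<rho>"
proof (induction \<rho> e arbitrary: w rule: fl_closure.induct)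
  case (1 \<rho> x)
  then show ?case by simp
next
  case (2 \<rho> x b)
  define N where "N = msubst \<rho> (Nu x b)"
  have closed_N: "fvars N = {}"
    unfolding N_def using fvars_msubst[OF "2.prems"(1)] "2.prems"(2) by blast
  have env: "closed_env (\<rho>(x \<mapsto> N))"
    using "2.prems"(1) closed_N by simp
  have dom: "fvars b \<subseteq> dom (\<rho>(x \<mapsto> N))"
    using "2.prems"(2) by auto
  have ran: "ran (\<rho>(x \<mapsto> N)) \<subseteq> insert N (ran \<rho>)"
    by (auto simp: ran_def)
  have fl_closure_Nu: "fl_closure \<rho> (Nu x b) = insert N (fl_closure (\<rho>(x \<mapsto> N)) b)"
    by (simp add: N_def)
  show ?case
  proof (cases "w = N")
    case True
    have "successors N = {msubst (\<rho>(x \<mapsto> N)) b}"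
      using subst_msubst[OF "2.prems"(1) closed_N, of x b] by (simp add: N_def)
    with True fl_closure_Nu ran msubst_in_fl_closure[OF dom] show ?thesis
      by auto
  next
    case False
    then have "w \<in> fl_closure (\<rho>(x \<mapsto> N)) b"
      using "2.prems"(3) fl_closure_Nu by auto
    with "2.IH"[folded N_def, OF env dom]
    have "successors w \<subseteq> fl_closure (\<rho>(x \<mapsto> N)) b \<union> ran (\<rho>(x \<mapsto> N))"
      by blast
    with ran show ?thesis
      unfolding fl_closure_Nu by blast
  qed
next
  case (3 \<rho> L es)
  show ?case
  proof (cases "w = msubst \<rho> (Mod L es)")
    case True
    have "msubst \<rho> e \<in> fl_closure \<rho> (Mod L es) \<union> ran \<rho>" if "e \<in> set es" for e
      using msubst_in_fl_closure[of e \<rho>] "3.prems"(2) that by auto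
    with True show ?thesis
      by auto
  next
    case False
    then obtain e where e: "e \<in> set es" "w \<in> fl_closure \<rho> e"
      using "3.prems"(3) by auto
    moreover have "fvars e \<subseteq> dom \<rho>"
      using e(1) "3.prems"(2) by auto
    ultimately have "successors w \<subseteq> fl_closure \<rho> e \<union> ran \<rho>"
      using "3.IH" "3.prems"(1) by blast
    with e(1) show ?thesis
      by auto
  qed
qed

lemma successors_fl_closure_empty:
  "fvars e = {} \<Longrightarrow> w \<in> fl_closure Map.empty e \<Longrightarrow> successors w \<subseteq> fl_closure Map.empty e"
  using successors_fl_closure[of Map.empty e w] by (simp add: closed_env_def)

lemma guarded_aux_no_fvars: "V \<inter> fvars e = {} \<Longrightarrow> guarded_aux (U \<union> V) e = guarded_aux U e"
proof (induction e arbitrary: U V)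
  case (Nu x e)
  have "insert x (U \<union> V) = insert x U \<union> (V - {x})"
    by auto
  with Nu show ?case
    by (metis Int_Diff Int_commute fvars.simps(2) guarded_aux.simps(2))
qed auto

lemma guarded_aux_closed: "fvars N = {} \<Longrightarrow> guarded_aux {} N \<Longrightarrow> guarded_aux V N"
  using guarded_aux_no_fvars[of V N "{}"] by simp

lemma guarded_aux_subst:
  "guarded_aux U b \<Longrightarrow> guarded_aux {} N \<Longrightarrow> fvars N = {} \<Longrightarrow>
    guarded_aux (U - {x}) (subst x N b)"
proof (induction b arbitrary: U)
  case (Nu y c)
  show ?case
  proof (cases "y = x")
    case True
    then show ?thesis
      using Nu.prems(1) by (simp add: insert_absorb)
  next
    case False
    then have "insert y U - {x} = insert y (U - {x})"
      by auto
    moreover have "guarded_aux (insert y U - {x}) (subst x N c)"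
      using Nu by simp
    ultimately show ?thesis
      using False by simp
  qed
next
  case (Mod L es)
  then show ?case
    by fastforce
qed (auto simp: guarded_aux_closed)

lemma wf_expr_subst: "wf_expr ar b \<Longrightarrow> wf_expr ar N \<Longrightarrow> wf_expr ar (subst x N b)"
  by (induction b) auto

lemma successors_E0: "e \<in> E0 ar \<Longrightarrow> successors e \<subseteq> E0 ar"
proof (cases e)
  case (Nu x b)
  assume "e \<in> E0 ar"
  then have "fvars (Nu x b) = {}" "guarded_aux {x} b" "wf_expr ar b" "guarded_aux {} (Nu x b)"
    using Nu by (auto simp: E0_def closed_expr_def guarded_def)
  then show ?thesis
    using Nu fvars_subst[of x "Nu x b" b] guarded_aux_subst[of "{x}" b "Nu x b" x]
      wf_expr_subst[of ar b "Nu x b" x]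
    by (auto simp: E0_def closed_expr_def guarded_def)
qed (auto simp: E0_def closed_expr_def guarded_def)

lemma nu_unfold_in_successors: "nu_unfold e \<in> insert e (successors e)"
  by (cases e) (auto simp: nu_unfold_def)

lemma funpow_nu_unfold_closed:
  assumes "\<And>y. y \<in> Y \<Longrightarrow> successors y \<subseteq> Y" "y \<in> Y"
  shows "(nu_unfold ^^ n) y \<in> Y"
proof (induction n)
  case (Suc n)
  then show ?case
    using assms(1) nu_unfold_in_successors[of "(nu_unfold ^^ n) y"] by auto
qed (simp add: assms(2))

fun top_nu_depth :: "('l, 'v) expr \<Rightarrow> nat" where
  "top_nu_depth (Var x) = 0"
| "top_nu_depth (Nu x b) = Suc (top_nu_depth b)"
| "top_nu_depth (Mod L es) = 0"

lemma top_nu_depth_subst: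
  "guarded_aux U b \<Longrightarrow> x \<in> U \<Longrightarrow> top_nu_depth (subst x N b) = top_nu_depth b"
  by (induction b arbitrary: U) auto

text \<open>Guardedness makes each unfolding remove one top-level \<open>\<nu>\<close>.\<close>
lemma ex_funpow_nu_unfold_is_mod: "e \<in> E0 ar \<Longrightarrow> \<exists>n. is_mod ((nu_unfold ^^ n) e)"
proof (induction "top_nu_depth e" arbitrary: e)
  case 0
  then show ?case
    by (cases e) (auto simp: is_mod_def E0_def closed_expr_def intro: exI[of _ 0])
next
  case (Suc k)
  then obtain x b where e: "e = Nu x b"
    by (cases e) auto
  then have "guarded_aux {x} b"
    using Suc.prems by (auto simp: E0_def guarded_def)
  then have "top_nu_depth (nu_unfold e) = k"
    using top_nu_depth_subst[of "{x}" b x e] Suc.hyps(2) e by (simp add: nu_unfold_def)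
  moreover have "nu_unfold e \<in> E0 ar"
    using successors_E0[OF Suc.prems] e by (simp add: nu_unfold_def)
  ultimately obtain n where "is_mod ((nu_unfold ^^ n) (nu_unfold e))"
    using Suc.hyps(1) by blast
  then show ?case
    by (metis funpow_Suc_right o_apply)
qed

lemma head_nf_is_mod: "e \<in> E0 ar \<Longrightarrow> is_mod (head_nf e)"
  unfolding head_nf_def using ex_funpow_nu_unfold_is_mod by (metis LeastI_ex)

lemma head_nf_closed:
  "(\<And>y. y \<in> Y \<Longrightarrow> successors y \<subseteq> Y) \<Longrightarrow> e \<in> Y \<Longrightarrow> head_nf e \<in> Y"
  unfolding head_nf_def by (rule funpow_nu_unfold_closed)

lemma subcoalgebra_if_successors_closed:
  assumes liftings: "\<forall>L. monotone_sp_pred_lifting ar Tobj Tmap lift L"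
    and YE0: "Y \<subseteq> E0 ar" and Y_closed: "\<And>y. y \<in> Y \<Longrightarrow> successors y \<subseteq> Y"
  shows "subcoalgebra Tobj Tmap (E0 ar) (eps ar lift) Y"
  unfolding subcoalgebra_def
proof (intro conjI image_subsetI)
  fix y assume y: "y \<in> Y"
  then have hY: "head_nf y \<in> Y"
    using head_nf_closed Y_closed by blast
  obtain L es where h: "head_nf y = Mod L es"
    using head_nf_is_mod[of y ar] y YE0 by (auto simp: is_mod_def)
  have "length es = ar L"
    using hY h YE0 by (auto simp: E0_def)
  moreover have "set es \<subseteq> Y"
    using Y_closed[OF hY] h by simp
  ultimately show "eps ar lift y \<in> Tmap Y (E0 ar) id ` Tobj Y"
    using sp_lifting_singletons_in_image[OF liftings[rule_format] _ _ YE0] h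
    by (simp add: eps_def)
qed (fact YE0)

theorem mainTheorem14:
  fixes ar :: "'l \<Rightarrow> nat"
    and Tobj :: "('l, 'v) expr set \<Rightarrow> 't set"
    and Tmap :: "('l, 'v) expr set \<Rightarrow> ('l, 'v) expr set \<Rightarrow> (('l, 'v) expr \<Rightarrow> ('l, 'v) expr) \<Rightarrow> 't \<Rightarrow> 't"
    and lift :: "'l \<Rightarrow> ('l, 'v) expr set \<Rightarrow> ('l, 'v) expr set list \<Rightarrow> 't set"
  assumes "set_functor Tobj Tmap"
    and "\<forall>L. monotone_sp_pred_lifting ar Tobj Tmap lift L"
  shows "locally_finite Tobj Tmap (E0 ar) (eps ar lift)"
  unfolding locally_finite_def
proof
  fix \<phi> :: "('l, 'v) expr" assume \<phi>: "\<phi> \<in> E0 ar"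
  then have closed: "fvars \<phi> = {}"
    by (simp add: E0_def closed_expr_def)
  define Y where "Y = fl_closure Map.empty \<phi> \<inter> E0 ar"
  have "\<And>y. y \<in> Y \<Longrightarrow> successors y \<subseteq> Y"
    unfolding Y_def using successors_fl_closure_empty[OF closed] successors_E0 by blast
  then have "subcoalgebra Tobj Tmap (E0 ar) (eps ar lift) Y"
    by (intro subcoalgebra_if_successors_closed[OF assms(2)]) (auto simp: Y_def)
  moreover have "finite Y" "\<phi> \<in> Y"
    unfolding Y_def using finite_fl_closure self_in_fl_closure[OF closed] \<phi> by auto
  ultimately show "\<exists>Y. finite Y \<and> \<phi> \<in> Y \<and> subcoalgebra Tobj Tmap (E0 ar) (eps ar lift) Y"
    by blast
qed

end
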